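(* Let $\mu$ be Lebesgue measure on $\mathbb{T}^2$, let $\alpha=n/m$ be rational ($n\in\mathbb{Z}$, $m\ge1$) and $\beta\in\mathbb{R}$. Then the measure-preserving system $(\mathbb{T}^2,\phi,\mu)$ is not weakly mixing. If moreover $\beta\in\mathbb{Z}+\alpha\mathbb{Z}$, then $(\mathbb{T}^2,\phi,\mu)$ is not ergodic.
   Context: $\mathbb{T}^2=[0,1)^2$ with addition modulo 1. Define $\theta(q)=1$ for $q\in[0,\tfrac12)$ and $\theta(q)=-1$ for $q\in[\tfrac12,1)$. The triangle map with parameters $(\alpha,\beta)$ is $\phi(q,p)=(q+p+\alpha\theta(q)+\beta,\ p+\alpha\theta(q)+\beta)\pmod 1$; it is a bijection preserving $\mu$. *)

theory Defs
  imports "HOL-Analysis.Analysis"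
begin

text \<open>The torus [0,1)^2, with addition modulo 1 realised by frac.\<close>
definition torus2 :: "(real \<times> real) set" where
  "torus2 = {0..<1} \<times> {0..<1}"

definition mu_T2 :: "(real \<times> real) measure" where
  "mu_T2 = restrict_space lborel torus2"

definition theta :: "real \<Rightarrow> real" where
  "theta q = (if 0 \<le> q \<and> q < 1/2 then 1 else -1)"

definition triangle_map :: "real \<Rightarrow> real \<Rightarrow> real \<times> real \<Rightarrow> real \<times> real" where
  "triangle_map \<alpha> \<beta> x = (case x of (q, p) \<Rightarrow>
     (frac (q + p + \<alpha> * theta q + \<beta>), frac (p + \<alpha> * theta q + \<beta>)))"

definition ergodic :: "'a measure \<Rightarrow> ('a \<Rightarrow> 'a) \<Rightarrow> bool" where
  "ergodic M T \<longleftrightarrow>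
     (\<forall>A\<in>sets M. T -` A \<inter> space M = A \<longrightarrow> measure M A = 0 \<or> measure M A = 1)"

definition weakly_mixing :: "'a measure \<Rightarrow> ('a \<Rightarrow> 'a) \<Rightarrow> bool" where
  "weakly_mixing M T \<longleftrightarrow>
     (\<forall>A\<in>sets M. \<forall>B\<in>sets M.
        (\<lambda>N. (\<Sum>n<N. \<bar>measure M ((T ^^ n) -` A \<inter> space M \<inter> B)
                        - measure M A * measure M B\<bar>) / real N) \<longlonglongrightarrow> 0)"

end

theory Submission
  imports Defs
begin

text \<open>
  For rational \<open>\<alpha> = n/m\<close> the coordinate function
  \<open>\<pi>(q,p) = frac (m p)\<close> is a factor map from the triangle map \<open>\<phi>\<close> onto the circle
  rotation by \<open>m \<beta>\<close>: since \<open>m \<alpha> \<theta>(q) = \<plusminus>n\<close> is an integer,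
  \<open>\<pi> (\<phi> x) = frac (\<pi> x + m \<beta>)\<close>.  Moreover \<open>\<pi>\<close> pushes the Lebesgue measure of the
  torus to the Lebesgue measure of the circle.  Hence the preimages under \<open>\<pi>\<close> of
  sets of the circle ("cylinders") behave under \<open>\<phi>\<close> like sets under a rotation:

  \<^item> a rotation is never weakly mixing: for the half circle \<open>H\<close> and each time
    \<open>k\<close>, one of the nine test rotates \<open>H + j/8\<close> overlaps \<open>\<phi>\<^sup>-\<^sup>k(H)\<close> in measure
    at least \<open>3/8 > 1/4\<close>, so the Cesaro averages of the correlation defects
    cannot all tend to 0;
  \<^item> if \<open>m \<beta>\<close> is an integer (which is the case when \<open>\<beta> \<in> \<int> + \<alpha> \<int>\<close>), the
    half-circle cylinder is invariant and has measure \<open>1/2\<close>, so \<open>\<phi>\<close> is not ergodic.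
\<close>

section \<open>Integrals of 1-periodic functions\<close>

lemma borel_measurable_frac[measurable]: "(frac :: real \<Rightarrow> real) \<in> borel_measurable borel"
proof -
  have "frac = (\<lambda>x::real. x - real_of_int \<lfloor>x\<rfloor>)" by (rule ext) (simp add: frac_def)
  moreover have "(\<lambda>x::real. x - real_of_int \<lfloor>x\<rfloor>) \<in> borel_measurable borel" by measurable
  ultimately show ?thesis by (simp only:)
qed

lemma periodic_integral_unit_interval:
  fixes g :: "real \<Rightarrow> ennreal"
  assumes [measurable]: "g \<in> borel_measurable borel"
  shows "(\<integral>\<^sup>+x. g (frac x) * indicator {a..<a+1} x \<partial>lborel)
       = (\<integral>\<^sup>+x. g (frac x) * indicator {0..<1} x \<partial>lborel)"
proof -
  have translate: "(\<integral>\<^sup>+x. F x \<partial>lborel) = (\<integral>\<^sup>+x. F (t + x) \<partial>lborel)"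
    if [measurable]: "F \<in> borel_measurable borel" for F :: "real \<Rightarrow> ennreal" and t
    using nn_integral_real_affine[OF that, of 1 t] by simp
  define k where "k = \<lfloor>a\<rfloor>"
  define a0 where "a0 = frac a"
  have a: "a = of_int k + a0" by (simp add: k_def a0_def frac_def)
  have a0: "0 \<le> a0" "a0 < 1" by (auto simp: a0_def frac_lt_1)
  text \<open>Translate by \<open>k\<close>, then move the part beyond 1 back by 1.\<close>
  have "(\<integral>\<^sup>+x. g (frac x) * indicator {a..<a+1} x \<partial>lborel)
      = (\<integral>\<^sup>+x. g (frac (of_int k + x)) * indicator {a..<a+1} (of_int k + x) \<partial>lborel)"
    by (rule translate) measurable
  also have "\<dots> = (\<integral>\<^sup>+x. g (frac x) * indicator {a0..<1} x + g (frac x) * indicator {1..<1+a0} x \<partial>lborel)"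
    by (rule nn_integral_cong) (use a0 in \<open>auto simp: a indicator_def\<close>)
  also have "\<dots> = (\<integral>\<^sup>+x. g (frac x) * indicator {a0..<1} x \<partial>lborel)
                + (\<integral>\<^sup>+x. g (frac x) * indicator {1..<1+a0} x \<partial>lborel)"
    by (rule nn_integral_add) measurable
  also have "(\<integral>\<^sup>+x. g (frac x) * indicator {1..<1+a0} x \<partial>lborel)
      = (\<integral>\<^sup>+x. g (frac (1 + x)) * indicator {1..<1+a0} (1 + x) \<partial>lborel)"
    by (rule translate) measurable
  also have "\<dots> = (\<integral>\<^sup>+x. g (frac x) * indicator {0..<a0} x \<partial>lborel)"
    by (rule nn_integral_cong) (auto simp: indicator_def frac_1_eq add.commute[of 1])
  also have "(\<integral>\<^sup>+x. g (frac x) * indicator {a0..<1} x \<partial>lborel) + \<dots>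
      = (\<integral>\<^sup>+x. g (frac x) * indicator {a0..<1} x + g (frac x) * indicator {0..<a0} x \<partial>lborel)"
    by (rule nn_integral_add[symmetric]) measurable
  also have "\<dots> = (\<integral>\<^sup>+x. g (frac x) * indicator {0..<1} x \<partial>lborel)"
    by (rule nn_integral_cong) (use a0 in \<open>auto simp: indicator_def\<close>)
  finally show ?thesis .
qed

lemma periodic_integral_interval:
  fixes g :: "real \<Rightarrow> ennreal"
  assumes [measurable]: "g \<in> borel_measurable borel"
  shows "(\<integral>\<^sup>+x. g (frac x) * indicator {c..<c + real m} x \<partial>lborel)
       = of_nat m * (\<integral>\<^sup>+x. g (frac x) * indicator {0..<1} x \<partial>lborel)"
proof (induction m)
  case 0
  then show ?case by simp
next
  case (Suc m)
  have "(\<integral>\<^sup>+x. g (frac x) * indicator {c..<c + real (Suc m)} x \<partial>lborel)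
     = (\<integral>\<^sup>+x. g (frac x) * indicator {c..<c + real m} x
              + g (frac x) * indicator {c + real m..<c + real m + 1} x \<partial>lborel)"
    by (rule nn_integral_cong) (auto simp: indicator_def)
  also have "\<dots> = (\<integral>\<^sup>+x. g (frac x) * indicator {c..<c + real m} x \<partial>lborel)
                + (\<integral>\<^sup>+x. g (frac x) * indicator {c + real m..<c + real m + 1} x \<partial>lborel)"
    by (rule nn_integral_add) measurable
  also have "\<dots> = of_nat (Suc m) * (\<integral>\<^sup>+x. g (frac x) * indicator {0..<1} x \<partial>lborel)"
    using Suc periodic_integral_unit_interval[OF assms, of "c + real m"]
    by (simp add: distrib_right)
  finally show ?case .
qed

text \<open>The map \<open>p \<mapsto> frac (m p + c)\<close> preserves Lebesgue measure on \<open>[0,1)\<close>,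
  in integral form: substitute \<open>x = m p + c\<close> and use the previous lemma.\<close>
lemma integral_frac_affine:
  fixes g :: "real \<Rightarrow> ennreal"
  assumes [measurable]: "g \<in> borel_measurable borel" and m: "m \<ge> 1"
  shows "(\<integral>\<^sup>+p. g (frac (real m * p + c)) * indicator {0..<1} p \<partial>lborel)
       = (\<integral>\<^sup>+x. g (frac x) * indicator {0..<1} x \<partial>lborel)"
proof -
  let ?L = "(\<integral>\<^sup>+p. g (frac (real m * p + c)) * indicator {0..<1} p \<partial>lborel)"
  let ?J = "(\<integral>\<^sup>+x. g (frac x) * indicator {0..<1} x \<partial>lborel)"
  have f: "(\<lambda>x. g (frac x) * indicator {c..<c + real m} x) \<in> borel_measurable borel"
    by measurable
  have "of_nat m * ?J = (\<integral>\<^sup>+x. g (frac x) * indicator {c..<c + real m} x \<partial>lborel)"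
    using periodic_integral_interval[OF assms(1)] by simp
  also have "\<dots> = ennreal (real m) * (\<integral>\<^sup>+p. g (frac (c + real m * p))
                     * indicator {c..<c + real m} (c + real m * p) \<partial>lborel)"
    using nn_integral_real_affine[OF f, of "real m" c] m by simp
  also have "(\<integral>\<^sup>+p. g (frac (c + real m * p)) * indicator {c..<c + real m} (c + real m * p) \<partial>lborel) = ?L"
    using m by (intro nn_integral_cong) (auto simp: indicator_def add.commute zero_le_mult_iff)
  finally have "of_nat m * ?J = of_nat m * ?L"
    by (simp add: ennreal_of_nat_eq_real_of_nat)
  moreover have "of_nat m \<noteq> (0::ennreal)" "of_nat m \<noteq> (top::ennreal)" using m by auto
  ultimately show ?thesis
    by (simp add: ennreal_mult_cancel_left)
qed

section \<open>The measure space of the torus\<close>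

lemma torus2_borel[measurable]: "torus2 \<in> sets (borel :: (real \<times> real) measure)"
  unfolding torus2_def by (rule borel_Times) auto

lemma space_mu_T2: "space mu_T2 = torus2"
  by (simp add: mu_T2_def space_restrict_space)

lemma sets_mu_T2: "A \<in> sets mu_T2 \<longleftrightarrow> A \<subseteq> torus2 \<and> A \<in> sets borel"
  unfolding mu_T2_def by (subst sets_restrict_space_iff) auto

lemma emeasure_mu_T2: "A \<subseteq> torus2 \<Longrightarrow> emeasure mu_T2 A = emeasure lborel A"
  unfolding mu_T2_def by (rule emeasure_restrict_space) auto

text \<open>Cylinder sets: preimages of a set \<open>X\<close> of the circle under the factor map
  \<open>(q,p) \<mapsto> frac (m p)\<close>, rotated by \<open>c\<close>.\<close>
definition cyl :: "nat \<Rightarrow> real \<Rightarrow> real set \<Rightarrow> (real \<times> real) set" where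
  "cyl m c X = {x \<in> torus2. frac (real m * snd x + c) \<in> X}"

lemma cyl_sets:
  assumes [measurable]: "X \<in> sets borel"
  shows "cyl m c X \<in> sets mu_T2"
proof -
  have "{x::real \<times> real. frac (real m * snd x + c) \<in> X} \<in> sets (borel \<Otimes>\<^sub>M borel)"
    using measurable_sets[of "\<lambda>x::real \<times> real. frac (real m * snd x + c)" "borel \<Otimes>\<^sub>M borel" borel X]
    by (simp add: space_pair_measure vimage_def)
  then have "{x::real \<times> real. frac (real m * snd x + c) \<in> X} \<in> sets borel"
    by (metis borel_prod)
  then have "torus2 \<inter> {x::real \<times> real. frac (real m * snd x + c) \<in> X} \<in> sets borel"
    using torus2_borel by (rule sets.Int[rotated])
  moreover have "cyl m c X = torus2 \<inter> {x. frac (real m * snd x + c) \<in> X}"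
    by (auto simp: cyl_def)
  ultimately show ?thesis by (simp add: sets_mu_T2)
qed

lemma emeasure_cyl:
  assumes m: "m \<ge> 1" and [measurable]: "X \<in> sets borel"
  shows "emeasure mu_T2 (cyl m c X) = emeasure lborel (X \<inter> {0..<1})"
proof -
  define S where "S = {p \<in> {0..<1::real}. frac (real m * p + c) \<in> X}"
  have [measurable]: "S \<in> sets borel" unfolding S_def by measurable
  have "cyl m c X = {0..<1} \<times> S" by (auto simp: torus2_def S_def cyl_def)
  moreover have "{0..<1} \<times> S \<subseteq> torus2" by (auto simp: torus2_def S_def)
  ultimately have "emeasure mu_T2 (cyl m c X) = emeasure (lborel \<Otimes>\<^sub>M lborel) ({0..<1::real} \<times> S)"
    by (simp add: emeasure_mu_T2 lborel_prod)
  also have "\<dots> = emeasure lborel S"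
    by (subst sigma_finite_measure.emeasure_pair_measure_Times[OF sigma_finite_lborel]) auto
  also have "\<dots> = (\<integral>\<^sup>+p. indicator X (frac (real m * p + c)) * indicator {0..<1} p \<partial>lborel)"
    by (subst nn_integral_indicator[symmetric])
      (auto intro!: nn_integral_cong simp: S_def indicator_def simp del: nn_integral_indicator)
  also have "\<dots> = (\<integral>\<^sup>+x. indicator X (frac x) * indicator {0..<1} x \<partial>lborel)"
    by (rule integral_frac_affine[OF _ m]) measurable
  also have "\<dots> = emeasure lborel (X \<inter> {0..<1})"
    by (subst nn_integral_indicator[symmetric])
      (auto intro!: nn_integral_cong simp: indicator_def simp del: nn_integral_indicator)
  finally show ?thesis .
qed

lemma measure_cyl:
  assumes "m \<ge> 1" and "X \<in> sets borel"
  shows "measure mu_T2 (cyl m c X) = measure lborel (X \<inter> {0..<1})"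
  using emeasure_cyl[OF assms] by (simp add: measure_def)

lemma measure_half_cyl:
  assumes "m \<ge> 1"
  shows "measure mu_T2 (cyl m c {..<1/2}) = 1/2"
proof -
  have "{..<1/2} \<inter> {0..<1} = {0..<1/2::real}" by auto
  then show ?thesis using measure_cyl[OF assms, of "{..<1/2}"] by simp
qed

text \<open>The whole torus is the cylinder over the whole circle, so \<open>\<mu>\<close> is finite (indeed a probability measure).\<close>
lemma finite_measure_mu_T2: "finite_measure mu_T2"
proof
  have "space mu_T2 = cyl 1 0 UNIV" by (auto simp: space_mu_T2 cyl_def)
  then show "emeasure mu_T2 (space mu_T2) \<noteq> \<infinity>"
    using emeasure_cyl[of 1 UNIV 0] by simp
qed

lemma cyl_shift_int: "cyl m (c + of_int i) X = cyl m c X"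
  by (simp add: cyl_def add.assoc[symmetric])

section \<open>The circle rotation factor\<close>

lemma frac_mult_frac: "frac (real m * frac w) = frac (real m * w)"
proof -
  have "real m * frac w = real m * w + of_int (- (int m * \<lfloor>w\<rfloor>))"
    by (simp add: frac_def algebra_simps)
  then show ?thesis by (simp only: frac_add_of_int_right)
qed

lemma triangle_map_pow_torus: "x \<in> torus2 \<Longrightarrow> (triangle_map a b ^^ k) x \<in> torus2"
  by (cases k) (auto simp: triangle_map_def torus2_def frac_lt_1 split: prod.splits)

text \<open>If \<open>m \<alpha>\<close> is an integer, \<open>frac (m p)\<close> is moved by \<open>\<phi>\<close> as by the rotation by \<open>m \<beta>\<close>:
  the jump \<open>m \<alpha> \<theta>(q) = \<plusminus> m \<alpha>\<close> is an integer and disappears modulo 1.\<close>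
lemma circle_factor_step:
  assumes m\<alpha>: "real m * \<alpha> = of_int n"
  shows "frac (real m * snd (triangle_map \<alpha> \<beta> x)) = frac (real m * snd x + real m * \<beta>)"
proof -
  obtain q p where x: "x = (q, p)" by (cases x)
  have jump: "real m * (\<alpha> * theta q) = of_int (if 0 \<le> q \<and> q < 1/2 then n else - n)"
    using m\<alpha> by (simp add: theta_def)
  have "frac (real m * snd (triangle_map \<alpha> \<beta> x)) = frac (real m * (p + \<alpha> * theta q + \<beta>))"
    by (simp add: x triangle_map_def frac_mult_frac)
  also have "real m * (p + \<alpha> * theta q + \<beta>) = (real m * p + real m * \<beta>) + real m * (\<alpha> * theta q)"
    by (simp add: algebra_simps)
  also have "frac \<dots> = frac (real m * p + real m * \<beta>)"
    by (simp only: jump frac_add_of_int_right)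
  finally show ?thesis by (simp add: x)
qed

lemma circle_factor_iterate:
  assumes "real m * \<alpha> = of_int n"
  shows "frac (real m * snd ((triangle_map \<alpha> \<beta> ^^ k) x))
       = frac (real m * snd x + real k * (real m * \<beta>))"
proof (induction k)
  case 0
  then show ?case by simp
next
  case (Suc k)
  have "frac (real m * snd ((triangle_map \<alpha> \<beta> ^^ Suc k) x))
      = frac (frac (real m * snd ((triangle_map \<alpha> \<beta> ^^ k) x)) + real m * \<beta>)"
    using circle_factor_step[OF assms] by simp
  also have "\<dots> = frac (real m * snd x + real (Suc k) * (real m * \<beta>))"
    using Suc by (simp add: algebra_simps)
  finally show ?case .
qed

lemma cyl_preimage:
  assumes "real m * \<alpha> = of_int n"
  shows "(triangle_map \<alpha> \<beta> ^^ k) -` cyl m c X \<inter> space mu_T2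
       = cyl m (c + real k * (real m * \<beta>)) X"
proof -
  have "frac (real m * snd ((triangle_map \<alpha> \<beta> ^^ k) x) + c)
      = frac (real m * snd x + (c + real k * (real m * \<beta>)))" for x
    using arg_cong[OF circle_factor_iterate[OF assms, where \<beta>=\<beta> and k=k and x=x], of "\<lambda>y. frac (y + c)"]
    by (simp add: algebra_simps)
  then show ?thesis
    by (auto simp: cyl_def space_mu_T2 triangle_map_pow_torus)
qed

lemma cyl_invariant:
  assumes "real m * \<alpha> = of_int n" and "real m * \<beta> = of_int i"
  shows "triangle_map \<alpha> \<beta> -` cyl m c X \<inter> space mu_T2 = cyl m c X"
  using cyl_preimage[OF assms(1), where k=1 and \<beta>=\<beta> and c=c and X=X]
    cyl_shift_int[of m c i X] assms(2) by simp

section \<open>Rotations are not weakly mixing\<close>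

text \<open>For every rotation \<open>t\<close> of the circle, one of the nine points \<open>j/8\<close> is
  within \<open>1/16\<close> of \<open>t\<close>; rotating the interval \<open>[1/16, 7/16]\<close> by \<open>j/8\<close> then lands
  inside the half circle after the further rotation by \<open>t - j/8\<close>.\<close>
lemma rotation_overlap:
  "\<exists>j\<le>(8::nat). \<forall>z. frac (z + real j / 8) \<in> {1/16..7/16} \<longrightarrow> frac (z + t) < 1/2"
proof -
  define f where "f = frac t"
  have f: "0 \<le> f" "f < 1" by (auto simp: f_def frac_lt_1)
  define j where "j = nat \<lfloor>8 * f + 1/2\<rfloor>"
  have j8: "j \<le> 8" and jf: "real j \<le> 8 * f + 1/2" "8 * f + 1/2 < real j + 1"
    using f by (auto simp: j_def) linarith+
  define d where "d = f - real j / 8"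
  have d: "-1/16 \<le> d" "d < 1/16" using jf unfolding d_def by (simp_all add: field_simps)
  show ?thesis
  proof (intro exI conjI allI impI)
    fix z
    assume z: "frac (z + real j / 8) \<in> {1/16..7/16}"
    have "z + t = (z + real j / 8 + d) + of_int \<lfloor>t\<rfloor>"
      by (simp add: d_def f_def frac_def)
    then have "frac (z + t) = frac (frac (z + real j / 8) + d)"
      by (simp only: frac_add_of_int_right frac_add_simps)
    also have "\<dots> = frac (z + real j / 8) + d"
      using z d by (intro frac_eq_id) auto
    finally show "frac (z + t) < 1/2" using z d by simp
  qed (use j8 in simp)
qed

text \<open>An abstract criterion: if the correlation defect of \<open>A\<close> with one of finitely
  many test sets \<open>B j\<close> is at least \<open>\<epsilon> > 0\<close> at every time, then the Cesaro means
  of the defects cannot all tend to 0, so \<open>T\<close> is not weakly mixing.\<close>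
lemma not_weakly_mixing_witness:
  fixes M :: "'a measure" and B :: "'b \<Rightarrow> 'a set"
  assumes J: "finite J" and A: "A \<in> sets M" and B: "\<And>j. j \<in> J \<Longrightarrow> B j \<in> sets M"
    and \<epsilon>: "\<epsilon> > 0"
    and defect: "\<And>k. \<exists>j\<in>J. \<epsilon> \<le> \<bar>measure M ((T ^^ k) -` A \<inter> space M \<inter> B j)
                                      - measure M A * measure M (B j)\<bar>"
  shows "\<not> weakly_mixing M T"
proof
  define D where "D j k = \<bar>measure M ((T ^^ k) -` A \<inter> space M \<inter> B j)
                          - measure M A * measure M (B j)\<bar>" for j k
  assume "weakly_mixing M T"
  then have "(\<lambda>N. (\<Sum>k<N. D j k) / real N) \<longlonglongrightarrow> 0" if "j \<in> J" for j
    using A B[OF that] unfolding weakly_mixing_def D_def by blast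
  then have lim: "(\<lambda>N. \<Sum>j\<in>J. (\<Sum>k<N. D j k) / real N) \<longlonglongrightarrow> 0"
    using tendsto_sum[of J "\<lambda>j N. (\<Sum>k<N. D j k) / real N" "\<lambda>_. 0"] by simp
  have "\<epsilon> \<le> (\<Sum>j\<in>J. (\<Sum>k<N. D j k) / real N)" if N: "N \<ge> 1" for N
  proof -
    have "(\<Sum>k<N. \<epsilon>) \<le> (\<Sum>k<N. \<Sum>j\<in>J. D j k)"
    proof (rule sum_mono)
      fix k
      obtain j where "j \<in> J" "\<epsilon> \<le> D j k" using defect[of k] by (auto simp: D_def)
      moreover have "D j k \<le> (\<Sum>j\<in>J. D j k)" if "j \<in> J" for j
        using J that by (intro member_le_sum) (auto simp: D_def)
      ultimately show "\<epsilon> \<le> (\<Sum>j\<in>J. D j k)" by fastforce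
    qed
    then have "\<epsilon> \<le> (\<Sum>k<N. \<Sum>j\<in>J. D j k) / real N"
      using N by (simp add: field_simps)
    also have "\<dots> = (\<Sum>j\<in>J. (\<Sum>k<N. D j k) / real N)"
      by (simp add: sum_divide_distrib[symmetric] sum.swap[of _ J])
    finally show ?thesis .
  qed
  then have "\<epsilon> \<le> 0"
    using LIMSEQ_le_const[OF lim, of \<epsilon>] by blast
  with \<epsilon> show False by simp
qed

text \<open>The correlation gap for the triangle map: at every time \<open>k\<close>, the preimage
  of the half-circle cylinder overlaps one of the nine test cylinders (base rotated
  by \<open>j/8\<close>) in the cylinder over \<open>[1/16, 7/16] + j/8\<close>, of measure \<open>3/8\<close>, whereas
  independence would give \<open>1/4\<close>.\<close>
lemma half_cyl_correlation_gap:
  assumes m: "m \<ge> 1" and m\<alpha>: "real m * \<alpha> = of_int n"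
  shows "\<exists>j\<in>{..8::nat}. 1/8 \<le>
           \<bar>measure mu_T2 ((triangle_map \<alpha> \<beta> ^^ k) -` cyl m 0 {..<1/2} \<inter> space mu_T2
                             \<inter> cyl m (real j / 8) {..<1/2})
            - measure mu_T2 (cyl m 0 {..<1/2}) * measure mu_T2 (cyl m (real j / 8) {..<1/2})\<bar>"
proof -
  interpret finite_measure mu_T2 by (rule finite_measure_mu_T2)
  define t where "t = real k * (real m * \<beta>)"
  obtain j where j: "j \<le> 8"
    and overlap: "\<And>z. frac (z + real j / 8) \<in> {1/16..7/16} \<Longrightarrow> frac (z + t) < 1/2"
    using rotation_overlap by blast
  have preimage: "(triangle_map \<alpha> \<beta> ^^ k) -` cyl m 0 {..<1/2} \<inter> space mu_T2 = cyl m t {..<1/2}"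
    unfolding cyl_preimage[OF m\<alpha>] t_def by simp
  have "cyl m (real j / 8) {1/16..7/16} \<subseteq> cyl m t {..<1/2} \<inter> cyl m (real j / 8) {..<1/2}"
    using overlap by (auto simp: cyl_def)
  then have "measure mu_T2 (cyl m (real j / 8) {1/16..7/16})
           \<le> measure mu_T2 (cyl m t {..<1/2} \<inter> cyl m (real j / 8) {..<1/2})"
    by (intro finite_measure_mono sets.Int cyl_sets) auto
  moreover have "measure mu_T2 (cyl m (real j / 8) {1/16..7/16}) = 3/8"
    using measure_cyl[OF m, of "{1/16..7/16}"] by (simp add: Int_absorb2 subset_eq)
  ultimately show ?thesis
    using j by (auto simp: preimage measure_half_cyl[OF m] intro!: bexI[of _ j])
qed

theorem corollary1:
  fixes n :: int and m :: nat and \<alpha> \<beta> :: real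
  assumes "m \<ge> 1" and "\<alpha> = of_int n / of_nat m"
  shows "\<not> weakly_mixing mu_T2 (triangle_map \<alpha> \<beta>) \<and>
         ((\<exists>k l :: int. \<beta> = of_int k + \<alpha> * of_int l) \<longrightarrow> \<not> ergodic mu_T2 (triangle_map \<alpha> \<beta>))"
proof
  have m: "m \<ge> 1" and m\<alpha>: "real m * \<alpha> = of_int n" using assms by auto
  have half_sets: "cyl m c {..<1/2} \<in> sets mu_T2" for c by (rule cyl_sets) auto
  show "\<not> weakly_mixing mu_T2 (triangle_map \<alpha> \<beta>)"
    by (rule not_weakly_mixing_witness[of "{..8::nat}" "cyl m 0 {..<1/2}" _
                                          "\<lambda>j. cyl m (real j / 8) {..<1/2}" "1/8"])
       (use half_cyl_correlation_gap[OF m m\<alpha>] half_sets in auto)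
  show "(\<exists>k l :: int. \<beta> = of_int k + \<alpha> * of_int l) \<longrightarrow> \<not> ergodic mu_T2 (triangle_map \<alpha> \<beta>)"
  proof (intro impI notI)
    assume "\<exists>k l :: int. \<beta> = of_int k + \<alpha> * of_int l"
    then obtain k l :: int where "\<beta> = of_int k + \<alpha> * of_int l" by blast
    then have "real m * \<beta> = of_int (int m * k + n * l)" using m\<alpha> by (simp add: algebra_simps)
    then have "triangle_map \<alpha> \<beta> -` cyl m 0 {..<1/2} \<inter> space mu_T2 = cyl m 0 {..<1/2}"
      by (rule cyl_invariant[OF m\<alpha>])
    moreover assume "ergodic mu_T2 (triangle_map \<alpha> \<beta>)"
    ultimately show False
      using half_sets[of 0] measure_half_cyl[OF m, of 0] unfolding ergodic_def by auto
  qed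
qed

end
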